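(* Let $n\ge1$, let $f$ be a rational function in $z_1,\dots,z_n$, and let $T\subseteq\mathbb C^n$ be a connected multicircular domain on which $f$ is holomorphic and such that the lowest power of $z_n$ occurring in the Laurent series expansion of $f$ on $T$ equals minus the order of the pole $z_n=0$ of $f$. Let $S$ be a nonempty open subset of $T$ and let $S'$ be the image of $S$ under the projection $(z_1,\dots,z_n)\mapsto(z_1,\dots,z_{n-1})$. Let $a_{k_1\dots k_n}\in\mathbb C$ ($k_i\in\mathbb Z$) be such that for each fixed $k_n\in\mathbb Z$ the series $\sum_{k_1,\dots,k_{n-1}\in\mathbb Z}a_{k_1\dots k_n}z_1^{k_1}\cdots z_{n-1}^{k_{n-1}}$ converges absolutely for every $(z_1,\dots,z_{n-1})\in S'$, and such that the series $$\sum_{k_n\in\mathbb Z}\Big(\sum_{k_1,\dots,k_{n-1}\in\mathbb Z}a_{k_1\dots k_n}z_1^{k_1}\cdots z_{n-1}^{k_{n-1}}\Big)z_n^{k_n},$$ regarded as a single series whose terms are the bracketed sums times $z_n^{k_n}$, is lower-truncated in $z_n$ (only finitely many negative $k_n$ with nonzero term) and converges to $f(z_1,\dots,z_n)$ for every $(z_1,\dots,z_n)\in S$. Then the Laurent series $\sum_{k_1,\dots,k_n\in\mathbb Z}a_{k_1\dots k_n}z_1^{k_1}\cdots z_n^{k_n}$ converges absolutely to $f(z_1,\dots,z_n)$ for every $(z_1,\dots,z_n)\in T$.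
   Context: A multicircular domain (centered at the origin) is an open subset $T\subseteq\mathbb C^n$ such that $(z_1,\dots,z_n)\in T$ implies $(z_1e^{i\theta_1},\dots,z_ne^{i\theta_n})\in T$ for all $\theta_1,\dots,\theta_n\in\mathbb R$. A holomorphic function on a connected multicircular domain has a unique Laurent series expansion centered at $0$ converging absolutely to it on the domain. *)

theory Defs
  imports "HOL-Analysis.Analysis"
begin

text \<open>Points of C^n are functions nat => complex vanishing at indices >= n
  (coordinate z_j of the paper is z (j-1)); C^n carries the subspace topology
  of the product topology on nat => complex, which is the Euclidean one.\<close>

definition Cn :: "nat \<Rightarrow> (nat \<Rightarrow> complex) set" where
  "Cn n = {z. \<forall>i\<ge>n. z i = 0}"

definition idx :: "nat \<Rightarrow> (nat \<Rightarrow> int) set" where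
  "idx n = {k. \<forall>i\<ge>n. k i = 0}"

definition multicircular :: "nat \<Rightarrow> (nat \<Rightarrow> complex) set \<Rightarrow> bool" where
  "multicircular n T \<longleftrightarrow> T \<subseteq> Cn n \<and>
     (\<forall>z\<in>T. \<forall>\<theta>::nat\<Rightarrow>real. (\<lambda>i. z i * exp (\<i> * of_real (\<theta> i))) \<in> T)"

definition domain_in :: "nat \<Rightarrow> (nat \<Rightarrow> complex) set \<Rightarrow> bool" where
  "domain_in n T \<longleftrightarrow> T \<subseteq> Cn n \<and> openin (top_of_set (Cn n)) T \<and> connected T"

definition holo_on :: "nat \<Rightarrow> ((nat \<Rightarrow> complex) \<Rightarrow> complex) \<Rightarrow> (nat \<Rightarrow> complex) set \<Rightarrow> bool" where
  "holo_on n f T \<longleftrightarrow> continuous_on T f \<and>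
     (\<forall>z\<in>T. \<forall>i<n. (\<lambda>w. f (z(i := w))) field_differentiable
         (at (z i) within {w. z(i := w) \<in> T}))"

definition lmono :: "nat \<Rightarrow> (nat \<Rightarrow> int) \<Rightarrow> (nat \<Rightarrow> complex) \<Rightarrow> complex" where
  "lmono n k z = (\<Prod>i<n. z i powi k i)"

text \<open>The term a_k z^k is defined (no negative power of a zero coordinate
  multiplied by a nonzero coefficient).\<close>
definition terms_defined :: "nat \<Rightarrow> ((nat \<Rightarrow> int) \<Rightarrow> complex) \<Rightarrow> (nat \<Rightarrow> complex) \<Rightarrow> bool" where
  "terms_defined n a z \<longleftrightarrow> (\<forall>k\<in>idx n. a k \<noteq> 0 \<longrightarrow> (\<forall>i<n. k i < 0 \<longrightarrow> z i \<noteq> 0))"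

definition laurent_abs_conv_to ::
  "nat \<Rightarrow> ((nat \<Rightarrow> int) \<Rightarrow> complex) \<Rightarrow> (nat \<Rightarrow> complex) \<Rightarrow> complex \<Rightarrow> bool" where
  "laurent_abs_conv_to n a z s \<longleftrightarrow> terms_defined n a z \<and>
     (\<lambda>k. norm (a k * lmono n k z)) summable_on idx n \<and>
     ((\<lambda>k. a k * lmono n k z) has_sum s) (idx n)"

definition is_mpoly :: "nat \<Rightarrow> ((nat \<Rightarrow> nat) \<Rightarrow> complex) \<Rightarrow> bool" where
  "is_mpoly n c \<longleftrightarrow> finite {\<alpha>. c \<alpha> \<noteq> 0} \<and> (\<forall>\<alpha>. c \<alpha> \<noteq> 0 \<longrightarrow> (\<forall>i\<ge>n. \<alpha> i = 0))"

definition mpoly_eval :: "nat \<Rightarrow> ((nat \<Rightarrow> nat) \<Rightarrow> complex) \<Rightarrow> (nat \<Rightarrow> complex) \<Rightarrow> complex" where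
  "mpoly_eval n c z = (\<Sum>\<alpha>\<in>{\<alpha>. c \<alpha> \<noteq> 0}. c \<alpha> * (\<Prod>i<n. z i ^ \<alpha> i))"

text \<open>Multiplicity of the factor z_n (variable index n-1) in a nonzero polynomial.\<close>
definition zn_val :: "nat \<Rightarrow> ((nat \<Rightarrow> nat) \<Rightarrow> complex) \<Rightarrow> nat" where
  "zn_val n c = (LEAST m. \<exists>\<alpha>. c \<alpha> \<noteq> 0 \<and> \<alpha> (n - 1) = m)"

text \<open>Order of the pole z_n = 0 of the rational function P/Q
  (0 if there is no pole; independent of the representation P/Q).\<close>
definition pole_order_zn :: "nat \<Rightarrow> ((nat \<Rightarrow> nat) \<Rightarrow> complex) \<Rightarrow> ((nat \<Rightarrow> nat) \<Rightarrow> complex) \<Rightarrow> nat" where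
  "pole_order_zn n P Q =
     (if (\<forall>\<alpha>. P \<alpha> = 0) then 0 else nat (int (zn_val n Q) - int (zn_val n P)))"

definition proj_last :: "nat \<Rightarrow> (nat \<Rightarrow> complex) \<Rightarrow> (nat \<Rightarrow> complex)" where
  "proj_last n z = z(n - 1 := 0)"

definition inner_sum :: "nat \<Rightarrow> ((nat \<Rightarrow> int) \<Rightarrow> complex) \<Rightarrow> int \<Rightarrow> (nat \<Rightarrow> complex) \<Rightarrow> complex" where
  "inner_sum n a kn z' = infsum (\<lambda>k'. a (k'(n - 1 := kn)) * lmono (n - 1) k' z') (idx (n - 1))"

end

theory Submission
  imports Defs "HOL-Complex_Analysis.Complex_Analysis"
begin

text \<open>Let c be the Laurent expansion of f on T. Near a point of S, on a product of punctured
  discs, fix the first n-1 variables: regrouping the absolutely convergent c-series by the power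
  of z_n (Fubini) and the given iterated a-series are two Laurent series in z_n, both
  lower-truncated and with the same sum f, so their coefficients -- the inner sums -- coincide by
  uniqueness of power series. The inner sums are Laurent series in n-1 variables; equal values on
  an open product set force equal coefficients, by induction on the number of variables from
  uniqueness of one-variable Laurent series (proved with Liouville's theorem). Hence a = c.\<close>

lemma open_contains_radial_pair:
  fixes W :: "complex set"
  assumes "open W" "w \<in> W"
  obtains t where "0 < t" "t < 1" "(1 + of_real t) * w \<in> W" "(1 - of_real t) * w \<in> W"
proof -
  have "((\<lambda>t. of_real t * w) \<longlongrightarrow> w) (at (1::real))"
    by (auto intro!: tendsto_eq_intros)
  hence "\<forall>\<^sub>F t in at 1. of_real t * w \<in> W"
    using assms by (rule topological_tendstoD)
  then obtain d where d: "d > 0" "\<And>t. t \<noteq> 1 \<Longrightarrow> dist t 1 < d \<Longrightarrow> of_real t * w \<in> W"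
    unfolding eventually_at by blast
  define t where "t = min (1/2) (d/2)"
  have "0 < t" "t < 1" "dist (1 + t) 1 < d" "dist (1 - t) 1 < d"
    using d(1) by (auto simp: t_def dist_real_def)
  with d(2)[of "1 + t"] d(2)[of "1 - t"] show thesis
    by (intro that[of t]) auto
qed

lemma norm_radial_scale:
  fixes w :: complex
  assumes "\<bar>t\<bar> \<le> 1"
  shows "norm ((1 + of_real t) * w) = (1 + t) * norm w"
proof -
  have "norm (1 + complex_of_real t) = \<bar>1 + t\<bar>"
    by (metis norm_of_real of_real_1 of_real_add)
  also have "\<dots> = 1 + t" using assms by simp
  finally show ?thesis by (simp add: norm_mult)
qed

lemma holomorphic_on_eval_fps_ball:
  fixes e :: "nat \<Rightarrow> complex"
  assumes "summable (\<lambda>i. e i * w ^ i)"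
  shows "eval_fps (Abs_fps e) holomorphic_on ball 0 (norm w)"
proof (rule holomorphic_on_eval_fps)
  have "ereal (norm w) \<le> fps_conv_radius (Abs_fps e)"
    using conv_radius_geI[OF assms] by (simp add: fps_conv_radius_def)
  thus "ball 0 (norm w) \<subseteq> eball 0 (fps_conv_radius (Abs_fps e))"
    by (metis eball_ereal eball_mono)
qed

lemma powser_eq_0_if_vanishing_on_ball:
  fixes e :: "nat \<Rightarrow> complex"
  assumes "summable (\<lambda>i. e i * w ^ i)" "w \<noteq> 0"
    and "\<And>x. norm x < norm w \<Longrightarrow> eval_fps (Abs_fps e) x = 0"
  shows "e i = 0"
proof -
  have "ereal 0 < ereal (norm w)" using assms(2) by simp
  also have "\<dots> \<le> fps_conv_radius (Abs_fps e)"
    using conv_radius_geI[OF assms(1)] by (simp add: fps_conv_radius_def)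
  finally have "fps_conv_radius (Abs_fps e) > 0" by (simp add: zero_ereal_def)
  moreover have "\<forall>\<^sub>F x in nhds 0. eval_fps (Abs_fps e) x = eval_fps 0 x"
    using eventually_nhds_in_open[of "ball 0 (norm w)" 0] assms(2,3)
    by (auto elim!: eventually_mono)
  ultimately have "Abs_fps e = 0" by (intro eval_fps_eqD) auto
  thus ?thesis by (metis fps_nth_Abs_fps fps_zero_nth)
qed

lemma powser_eq_0_if_sums_0_on_open:
  fixes e :: "nat \<Rightarrow> complex"
  assumes W: "open W" "W \<noteq> {}" "0 \<notin> W"
    and vanish: "\<And>w. w \<in> W \<Longrightarrow> (\<lambda>i. e i * w ^ i) sums 0"
  shows "e i = 0"
proof -
  obtain w0 where w0: "w0 \<in> W" using W(2) by blast
  obtain t where t: "0 < t" "t < 1" "(1 + of_real t) * w0 \<in> W"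
    using open_contains_radial_pair[OF W(1) w0] by blast
  define w1 where "w1 = (1 + of_real t) * w0"
  have "w0 \<noteq> 0" using w0 W(3) by blast
  hence norms: "norm w0 < norm w1" "w1 \<noteq> 0"
    using t norm_radial_scale[of t w0] by (auto simp: w1_def)
  have summ: "summable (\<lambda>i. e i * w1 ^ i)"
    using vanish t(3) by (auto simp: w1_def sums_iff)
  have zero_on_W: "eval_fps (Abs_fps e) w = 0" if "w \<in> W" for w
    using vanish[OF that] by (simp add: eval_fps_def sums_iff)
  have limpt: "w0 islimpt W \<inter> ball 0 (norm w1)"
    using W(1) w0 norms by (intro interior_limit_point) (auto simp: interior_open)
  have "eval_fps (Abs_fps e) x = 0" if "norm x < norm w1" for x
    by (rule analytic_continuation[OF holomorphic_on_eval_fps_ball[OF summ] open_ball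
          connected_ball _ _ limpt]) (use w0 norms that zero_on_W in auto)
  thus ?thesis by (rule powser_eq_0_if_vanishing_on_ball[OF summ norms(2)])
qed

lemma laurent_series_split:
  fixes \<beta> :: "int \<Rightarrow> complex"
  assumes "((\<lambda>j. \<beta> j * w powi j) has_sum s) UNIV"
  obtains sp sn where "(\<lambda>i. \<beta> (int i) * w ^ i) sums sp"
    "(\<lambda>i. (if i = 0 then 0 else \<beta> (- int i)) * inverse w ^ i) sums sn" "s = sp + sn"
proof -
  define u where "u = (\<lambda>j. \<beta> j * w powi j)"
  have hs: "(u has_sum s) UNIV" using assms by (simp add: u_def)
  hence "u summable_on UNIV" by (rule has_sum_imp_summable)
  hence pos: "(u has_sum infsum u {0..}) {0..}" and neg: "(u has_sum infsum u {..<0}) {..<0}"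
    by (auto intro: summable_on_subset_banach has_sum_infsum)
  have "(u has_sum (infsum u {0..} + infsum u {..<0})) ({0..} \<union> {..<0})"
    by (intro has_sum_Un_disjoint pos neg) auto
  moreover have "{0::int..} \<union> {..<0} = UNIV" by auto
  ultimately have "s = infsum u {0..} + infsum u {..<0}"
    using hs by (metis has_sum_unique)
  moreover have "(u has_sum infsum u {0..}) {0..} \<longleftrightarrow>
      ((\<lambda>i. \<beta> (int i) * w ^ i) has_sum infsum u {0..}) UNIV"
    by (rule has_sum_reindex_bij_witness[where i=int and j=nat]) (simp_all add: u_def power_int_def)
  moreover have "(u has_sum infsum u {..<0}) {..<0} \<longleftrightarrow>
      ((\<lambda>i. (if i = 0 then 0 else \<beta> (- int i)) * inverse w ^ i) has_sum infsum u {..<0}) {1..}"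
    by (rule has_sum_reindex_bij_witness[where i="\<lambda>k. - int k" and j="\<lambda>k. nat (- k)"])
      (simp_all add: u_def power_int_def power_inverse)
  moreover have "((\<lambda>i. (if i = 0 then 0 else \<beta> (- int i)) * inverse w ^ i) has_sum x) {1..} \<longleftrightarrow>
      ((\<lambda>i. (if i = 0 then 0 else \<beta> (- int i)) * inverse w ^ i) has_sum x) UNIV" for x
    by (rule has_sum_cong_neutral) auto
  ultimately show thesis
    using pos neg by (intro that[of "infsum u {0..}" "infsum u {..<0}"]) (auto intro: has_sum_imp_sums)
qed

lemma holomorphic_on_eval_fps_inverse:
  fixes q :: "nat \<Rightarrow> complex"
  assumes "summable (\<lambda>i. q i * v ^ i)" "v \<noteq> 0"
  shows "(\<lambda>z. eval_fps (Abs_fps q) (inverse z)) holomorphic_on - cball 0 (inverse (norm v))"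
proof -
  have "inverse ` (- cball (0::complex) (inverse (norm v))) \<subseteq> ball 0 (norm v)"
  proof
    fix u :: complex assume "u \<in> inverse ` (- cball 0 (inverse (norm v)))"
    then obtain z :: complex where z: "u = inverse z" "inverse (norm v) < norm z"
      unfolding mem_cball_0 by auto
    have "inverse (norm z) < inverse (inverse (norm v))"
      using z(2) assms(2) by (intro less_imp_inverse_less) auto
    hence "norm u < norm v" using z(1) by (simp add: norm_inverse)
    thus "u \<in> ball 0 (norm v)" by simp
  qed
  moreover have "(\<lambda>z. inverse z) holomorphic_on - cball 0 (inverse (norm v))"
    by (intro holomorphic_on_inverse holomorphic_on_id) (auto dest: order.strict_trans1[OF norm_ge_zero])
  ultimately have "(eval_fps (Abs_fps q) \<circ> inverse) holomorphic_on - cball 0 (inverse (norm v))"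
    by (intro holomorphic_on_compose_gen[OF _ holomorphic_on_eval_fps_ball[OF assms(1)]])
  thus ?thesis by (simp add: o_def)
qed

text \<open>If P(z) + N(1/z) vanishes on an annulus, gluing P with -N(1/z) gives an entire function
  vanishing at infinity; by Liouville it is 0, and so are P and N.\<close>

lemma powser_pair_eq_0_if_cancel_on_annulus:
  fixes p q :: "nat \<Rightarrow> complex"
  assumes summ: "summable (\<lambda>i. p i * w ^ i)" "summable (\<lambda>i. q i * v ^ i)" and "q 0 = 0"
    and radii: "v \<noteq> 0" "inverse (norm v) < norm w"
    and cancel: "\<And>z. inverse (norm v) < norm z \<Longrightarrow> norm z < norm w \<Longrightarrow>
                   eval_fps (Abs_fps p) z + eval_fps (Abs_fps q) (inverse z) = 0"
  shows "p i = 0" and "q i = 0"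
proof -
  define P N where "P = eval_fps (Abs_fps p)" and "N = eval_fps (Abs_fps q)"
  define r where "r = inverse (norm v)"
  define G where "G z = (if norm z < norm w then P z else - N (inverse z))" for z
  have G_outer: "G z = - N (inverse z)" if "r < norm z" for z
    using cancel[of z] that by (auto simp: G_def P_def N_def r_def add_eq_0_iff)
  have "G holomorphic_on ball 0 (norm w) \<union> - cball 0 r"
  proof (rule holomorphic_on_Un)
    show "G holomorphic_on ball 0 (norm w)"
      using holomorphic_on_eval_fps_ball[OF summ(1)]
      by (rule holomorphic_transform) (simp add: G_def P_def)
    show "G holomorphic_on - cball 0 r"
      by (rule holomorphic_transform[of "\<lambda>z. - N (inverse z)"])
         (auto simp: G_outer N_def r_def intro!: holomorphic_intros
           holomorphic_on_eval_fps_inverse summ(2) radii(1))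
  qed auto
  moreover have "ball 0 (norm w) \<union> - cball 0 r = UNIV" using radii by (auto simp: r_def)
  ultimately have "G holomorphic_on UNIV" by metis
  moreover have "(G \<longlongrightarrow> 0) at_infinity"
  proof -
    have "continuous_on (ball 0 (norm v)) N"
      unfolding N_def
      by (rule holomorphic_on_imp_continuous_on[OF holomorphic_on_eval_fps_ball[OF summ(2)]])
    hence "isCont N 0" using radii by (simp add: continuous_on_eq_continuous_at)
    hence "((\<lambda>z. - N (inverse z)) \<longlongrightarrow> - N 0) at_infinity"
      by (intro tendsto_minus isCont_tendsto_compose[OF _ tendsto_inverse_0])
    moreover have "N 0 = 0" by (simp add: N_def eval_fps_at_0 \<open>q 0 = 0\<close>)
    moreover have "\<forall>\<^sub>F z in at_infinity. - N (inverse z) = G z"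
      unfolding eventually_at_infinity using radii
      by (intro exI[of _ "norm w"]) (auto simp: G_outer r_def)
    ultimately show ?thesis by (auto intro: Lim_transform_eventually)
  qed
  ultimately have G0: "G z = 0" for z by (rule Liouville_weak_0)
  have "w \<noteq> 0" using radii by auto
  thus "p i = 0"
  proof (rule powser_eq_0_if_vanishing_on_ball[OF summ(1)])
    fix z :: complex assume "norm z < norm w"
    thus "eval_fps (Abs_fps p) z = 0" using G0[of z] by (simp add: G_def P_def)
  qed
  show "q i = 0"
  proof (rule powser_eq_0_if_vanishing_on_ball[OF summ(2) radii(1)])
    fix u :: complex assume u: "norm u < norm v"
    have "u = 0 \<or> r < norm (inverse u)"
    proof (cases "u = 0")
      case False
      hence "inverse (norm v) < inverse (norm u)" using u by (intro less_imp_inverse_less) auto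
      thus ?thesis by (simp add: r_def norm_inverse)
    qed simp
    thus "eval_fps (Abs_fps q) u = 0"
      using G_outer[of "inverse u"] G0 \<open>q 0 = 0\<close> by (auto simp: N_def eval_fps_at_0)
  qed
qed

lemma laurent_series_eq_0_if_vanishing_on_open:
  fixes \<beta> :: "int \<Rightarrow> complex"
  assumes W: "open W" "W \<noteq> {}" "0 \<notin> W"
    and vanish: "\<And>w. w \<in> W \<Longrightarrow> ((\<lambda>j. \<beta> j * w powi j) has_sum 0) UNIV"
  shows "\<beta> j = 0"
proof -
  define p where "p i = \<beta> (int i)" for i
  define q where "q i = (if i = 0 then 0 else \<beta> (- int i))" for i
  define L where "L z = eval_fps (Abs_fps p) z + eval_fps (Abs_fps q) (inverse z)" for z
  have parts: "summable (\<lambda>i. p i * w ^ i) \<and> summable (\<lambda>i. q i * inverse w ^ i) \<and> L w = 0"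
    if "w \<in> W" for w
  proof -
    obtain sp sn where "(\<lambda>i. p i * w ^ i) sums sp" "(\<lambda>i. q i * inverse w ^ i) sums sn" "0 = sp + sn"
      using laurent_series_split[OF vanish[OF \<open>w \<in> W\<close>]] unfolding p_def q_def by blast
    thus ?thesis by (auto simp: L_def eval_fps_def sums_iff)
  qed
  obtain w0 where w0: "w0 \<in> W" using W(2) by blast
  obtain t where t: "0 < t" "t < 1" "(1 + of_real t) * w0 \<in> W" "(1 - of_real t) * w0 \<in> W"
    using open_contains_radial_pair[OF W(1) w0] by blast
  define w v where "w = (1 + of_real t) * w0" and "v = inverse ((1 - of_real t) * w0)"
  have "inverse (norm v) = norm ((1 - of_real t) * w0)"
    by (simp only: v_def norm_inverse inverse_inverse_eq)
  also have "\<dots> = (1 - t) * norm w0" using t norm_radial_scale[of "-t" w0] by simp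
  finally have nv: "inverse (norm v) = (1 - t) * norm w0" .
  have nw: "norm w = (1 + t) * norm w0" using t norm_radial_scale[of t w0] by (simp add: w_def)
  have "w0 \<noteq> 0" using w0 W(3) by blast
  hence radii: "v \<noteq> 0" "inverse (norm v) < norm w0" "norm w0 < norm w"
    using nv nw t by auto
  define A where "A = {z::complex. inverse (norm v) < norm (z - 0) \<and> norm (z - 0) < norm w}"
  have A_eq: "A = ball 0 (norm w) - cball 0 (inverse (norm v))" by (auto simp: A_def)
  have A: "open A" "A \<subseteq> ball 0 (norm w)" "A \<subseteq> - cball 0 (inverse (norm v))"
    unfolding A_eq by (auto simp: open_Diff)
  have "connected A" unfolding A_def by (rule connected_annulus(1)) simp
  have limpt: "w0 islimpt W \<inter> A"
    using A(1) W(1) w0 radii by (intro interior_limit_point) (auto simp: interior_open A_def)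
  have summ: "summable (\<lambda>i. p i * w ^ i)" "summable (\<lambda>i. q i * v ^ i)"
    using parts[OF t(3)] parts[OF t(4)] by (simp_all add: w_def v_def)
  have "L holomorphic_on A"
    unfolding L_def using summ radii(1)
    by (intro holomorphic_on_add holomorphic_on_subset[OF _ A(2)] holomorphic_on_subset[OF _ A(3)]
          holomorphic_on_eval_fps_ball holomorphic_on_eval_fps_inverse)
  hence "L z = 0" if "z \<in> A" for z
    by (rule analytic_continuation[OF _ A(1) \<open>connected A\<close> _ _ limpt _ that])
       (use parts w0 radii in \<open>auto simp: A_def\<close>)
  hence cancel: "eval_fps (Abs_fps p) z + eval_fps (Abs_fps q) (inverse z) = 0"
    if "inverse (norm v) < norm z" "norm z < norm w" for z
    using that by (simp add: A_def L_def)
  have "q 0 = 0" by (simp add: q_def)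
  moreover have "inverse (norm v) < norm w" using radii by linarith
  ultimately have "p (nat j) = 0" "q (nat (- j)) = 0"
    using powser_pair_eq_0_if_cancel_on_annulus[OF summ _ radii(1) _ cancel] by blast+
  thus ?thesis
    by (cases "j \<ge> 0") (auto simp: p_def q_def)
qed

lemma sums_shift_if_partial_sums:
  fixes u :: "int \<Rightarrow> complex" and M :: nat
  assumes lim: "(\<lambda>N::nat. \<Sum>j\<in>{-K..int N}. u j) \<longlonglongrightarrow> s"
    and "\<forall>j < -K. u j = 0" "\<forall>j < - int M. u j = 0"
  shows "(\<lambda>i. u (int i - int M)) sums s"
proof -
  have "(\<Sum>i<N + (M + 1). u (int i - int M)) = (\<Sum>j\<in>{-K..int N}. u j)" for N
  proof -
    have "(\<Sum>i<N + (M + 1). u (int i - int M)) = (\<Sum>j\<in>{- int M..int N}. u j)"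
      by (rule sum.reindex_bij_witness[where j="\<lambda>i. int i - int M" and i="\<lambda>j. nat (j + int M)"])
        auto
    also have "\<dots> = (\<Sum>j\<in>{min (-K) (- int M)..int N}. u j)"
      by (rule sum.mono_neutral_left) (use assms in auto)
    also have "\<dots> = (\<Sum>j\<in>{-K..int N}. u j)"
      by (rule sum.mono_neutral_right) (use assms in auto)
    finally show ?thesis .
  qed
  with lim have "(\<lambda>N. \<Sum>i<N + (M + 1). u (int i - int M)) \<longlonglongrightarrow> s" by simp
  thus ?thesis unfolding sums_def by (rule LIMSEQ_offset)
qed

lemma sums_shift_if_has_sum:
  fixes u :: "int \<Rightarrow> complex" and M :: nat
  assumes "(u has_sum s) UNIV" "\<forall>j < - int M. u j = 0"
  shows "(\<lambda>i. u (int i - int M)) sums s"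
proof -
  have "(u has_sum s) {- int M..}"
    using assms by (subst has_sum_cong_neutral[where g=u and T=UNIV]) auto
  moreover have "(u has_sum s) {- int M..} \<longleftrightarrow> ((\<lambda>i. u (int i - int M)) has_sum s) UNIV"
    by (rule has_sum_reindex_bij_witness[where j="\<lambda>j. nat (j + int M)" and i="\<lambda>i. int i - int M"])
      auto
  ultimately show ?thesis by (simp add: has_sum_imp_sums)
qed

lemma lower_truncated_laurent_coeffs_eq:
  fixes g h :: "int \<Rightarrow> complex" and F :: "complex \<Rightarrow> complex" and p :: int
  assumes W: "open W" "W \<noteq> {}" "0 \<notin> W"
    and h_low: "\<forall>j < p. h j = 0"
    and g_conv: "\<forall>w\<in>W. \<exists>K. (\<forall>j < -K. g j = 0) \<and>
                   (\<lambda>N::nat. \<Sum>j\<in>{-K..int N}. g j * w powi j) \<longlonglongrightarrow> F w"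
    and h_conv: "\<forall>w\<in>W. ((\<lambda>j. h j * w powi j) has_sum F w) UNIV"
  shows "g j = h j"
proof -
  obtain K0 where K0: "\<forall>j < -K0. g j = 0" using g_conv W(2) by blast
  define M where "M = nat (max K0 (- p))"
  have M: "K0 \<le> int M" "- p \<le> int M" by (auto simp: M_def)
  have low: "g j = 0" "h j = 0" if "j < - int M" for j
    using that K0 h_low M by auto
  \<comment> \<open>Multiplying by w^M turns both series into power series with the same sum.\<close>
  have "g (int i - int M) - h (int i - int M) = 0" for i
  proof (rule powser_eq_0_if_sums_0_on_open[OF W,
        where e="\<lambda>i. g (int i - int M) - h (int i - int M)"])
    fix w assume "w \<in> W"
    then obtain K where K: "\<forall>j < -K. g j = 0"
      "(\<lambda>N::nat. \<Sum>j\<in>{-K..int N}. g j * w powi j) \<longlonglongrightarrow> F w"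
      using g_conv by blast
    have "(\<lambda>i. g (int i - int M) * w powi (int i - int M)) sums F w"
      using sums_shift_if_partial_sums[OF K(2)] K(1) low by simp
    moreover have "(\<lambda>i. h (int i - int M) * w powi (int i - int M)) sums F w"
      using sums_shift_if_has_sum[where u="\<lambda>j. h j * w powi j"] h_conv \<open>w \<in> W\<close> low by simp
    ultimately have "(\<lambda>i. (g (int i - int M) - h (int i - int M)) * (w powi (int i - int M) * w ^ M))
        sums ((F w - F w) * w ^ M)"
      unfolding mult.assoc[symmetric] left_diff_distrib by (intro sums_mult2 sums_diff)
    moreover have "w powi (int i - int M) * w ^ M = w ^ i" for i
    proof -
      have "w \<noteq> 0" using \<open>w \<in> W\<close> W(3) by blast
      thus ?thesis by (simp add: power_int_diff power_int_of_nat)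
    qed
    ultimately show "(\<lambda>i. (g (int i - int M) - h (int i - int M)) * w ^ i) sums 0" by simp
  qed
  from this[of "nat (j + int M)"] show ?thesis
    by (cases "j < - int M") (auto simp: low)
qed

lemma lmono_Suc_upd: "lmono (Suc m) (k(m := j)) (z(m := w)) = lmono m k z * w powi j"
proof -
  have "(\<Prod>i<m. (z(m := w)) i powi (k(m := j)) i) = (\<Prod>i<m. z i powi k i)"
    by (rule prod.cong) auto
  thus ?thesis by (simp add: lmono_def)
qed

lemma idx_Suc_restrict: "k \<in> idx (Suc m) \<Longrightarrow> k(m := 0) \<in> idx m"
  and idx_Suc_extend: "k \<in> idx m \<Longrightarrow> k(m := j) \<in> idx (Suc m)"
  by (auto simp: idx_def)

lemma Cn_Suc_extend: "z \<in> Cn m \<Longrightarrow> z(m := w) \<in> Cn (Suc m)"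
  by (auto simp: Cn_def)

lemma laurent_has_sum_iterated:
  fixes b :: "(nat \<Rightarrow> int) \<Rightarrow> complex"
  assumes hs: "((\<lambda>k. b k * lmono (Suc m) k (z(m := w))) has_sum s) (idx (Suc m))"
    and "w \<noteq> 0"
  shows "(\<lambda>k. b (k(m := j)) * lmono m k z) summable_on idx m"
    and "((\<lambda>j. (\<Sum>\<^sub>\<infinity>k\<in>idx m. b (k(m := j)) * lmono m k z) * w powi j) has_sum s) UNIV"
proof -
  define g where "g = (\<lambda>(j, k). b (k(m := j)) * lmono m k z * w powi j)"
  have "(g has_sum s) (UNIV \<times> idx m) \<longleftrightarrow>
      ((\<lambda>k. b k * lmono (Suc m) k (z(m := w))) has_sum s) (idx (Suc m))"
    by (rule has_sum_reindex_bij_witness[where j="\<lambda>(j, k). k(m := j)"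
          and i="\<lambda>k. (k m, k(m := 0))"])
       (auto simp: g_def lmono_Suc_upd idx_Suc_restrict idx_Suc_extend, auto simp: idx_def)
  with hs have G: "(g has_sum s) (UNIV \<times> idx m)" by simp
  have "(\<lambda>k. g (j, k)) summable_on idx m" for j
    using G by (intro summable_on_SigmaD1[where f="\<lambda>j k. g (j, k)"]) (auto intro: has_sum_imp_summable)
  hence "(\<lambda>k. g (j, k) * inverse (w powi j)) summable_on idx m" for j
    by (rule summable_on_cmult_left)
  moreover have "g (j, k) * inverse (w powi j) = b (k(m := j)) * lmono m k z" for j k
    using \<open>w \<noteq> 0\<close> by (simp add: g_def)
  ultimately show summ: "(\<lambda>k. b (k(m := j)) * lmono m k z) summable_on idx m" for j
    by simp
  have "((\<lambda>k. g (j, k)) has_sum (\<Sum>\<^sub>\<infinity>k\<in>idx m. b (k(m := j)) * lmono m k z) * w powi j) (idx m)" for j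
    unfolding g_def by (simp add: has_sum_cmult_left has_sum_infsum summ)
  thus "((\<lambda>j. (\<Sum>\<^sub>\<infinity>k\<in>idx m. b (k(m := j)) * lmono m k z) * w powi j) has_sum s) UNIV"
    by (rule has_sum_SigmaD[OF G])
qed

lemma laurent_eq_0_if_vanishing_on_box:
  fixes b :: "(nat \<Rightarrow> int) \<Rightarrow> complex" and X :: "nat \<Rightarrow> complex set"
  assumes "\<And>i. i < m \<Longrightarrow> open (X i) \<and> X i \<noteq> {} \<and> 0 \<notin> X i"
    and "\<And>z. z \<in> Cn m \<Longrightarrow> \<forall>i<m. z i \<in> X i \<Longrightarrow> ((\<lambda>k. b k * lmono m k z) has_sum 0) (idx m)"
    and "k \<in> idx m"
  shows "b k = 0"
  using assms
proof (induction m arbitrary: b k)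
  case 0
  have "Cn 0 = {\<lambda>_. 0}" "idx 0 = {\<lambda>_. 0}" by (auto simp: Cn_def idx_def)
  with 0 show ?case
    by (force simp: lmono_def has_sum_finite_iff)
next
  case (Suc m)
  have X: "open (X m)" "X m \<noteq> {}" "0 \<notin> X m" using Suc.prems(1) by auto
  obtain w0 where w0: "w0 \<in> X m" using X(2) by blast
  have slices_vanish: "((\<lambda>k. b (k(m := j)) * lmono m k z) has_sum 0) (idx m)"
    if z: "z \<in> Cn m" "\<forall>i<m. z i \<in> X i" for z j
  proof -
    have slice: "((\<lambda>k. b k * lmono (Suc m) k (z(m := w))) has_sum 0) (idx (Suc m))"
      if "w \<in> X m" for w
    proof -
      have "\<forall>i<Suc m. (z(m := w)) i \<in> X i" using z(2) that by (auto simp: less_Suc_eq)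
      thus ?thesis by (rule Suc.prems(2)[OF Cn_Suc_extend[OF z(1)]])
    qed
    have "(\<Sum>\<^sub>\<infinity>k\<in>idx m. b (k(m := j)) * lmono m k z) = 0"
      by (rule laurent_series_eq_0_if_vanishing_on_open[OF X,
            where \<beta>="\<lambda>j. \<Sum>\<^sub>\<infinity>k\<in>idx m. b (k(m := j)) * lmono m k z"])
         (use laurent_has_sum_iterated(2)[OF slice] X(3) in blast)
    moreover have "(\<lambda>k. b (k(m := j)) * lmono m k z) summable_on idx m"
      using laurent_has_sum_iterated(1)[OF slice[OF w0]] w0 X(3) by blast
    ultimately show ?thesis by (metis has_sum_infsum)
  qed
  have "b ((k(m := 0))(m := k m)) = 0"
  proof (rule Suc.IH[where b="\<lambda>k'. b (k'(m := k m))"])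
    show "k(m := 0) \<in> idx m" using Suc.prems(3) by (rule idx_Suc_restrict)
  qed (use Suc.prems(1) slices_vanish in auto)
  thus ?case by simp
qed

lemma openin_Cn_contains_punctured_box:
  assumes "openin (top_of_set (Cn n)) S" "S \<noteq> {}"
  obtains X where "\<And>i. open (X i) \<and> X i \<noteq> {} \<and> 0 \<notin> X i"
    and "\<And>z. z \<in> Cn n \<Longrightarrow> \<forall>i<n. z i \<in> X i \<Longrightarrow> z \<in> S"
proof -
  obtain z0 where z0: "z0 \<in> S" using assms(2) by blast
  obtain U where U: "open U" "S = Cn n \<inter> U" using assms(1) by (auto simp: openin_open)
  have "openin (product_topology (\<lambda>i. euclidean) UNIV) U" using U(1) by (simp add: open_fun_def)
  from product_topology_open_contains_basis[OF this, of z0]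
  obtain B where B: "z0 \<in> (\<Pi>\<^sub>E i\<in>UNIV. B i)" "\<And>i. open (B i)" "(\<Pi>\<^sub>E i\<in>UNIV. B i) \<subseteq> U"
    using z0 U(2) by auto
  show thesis
  proof (rule that[of "\<lambda>i. B i - {0}"])
    fix i
    have "B i \<noteq> {0}" using B(2) not_open_singleton by metis
    moreover have "z0 i \<in> B i" using B(1) by auto
    ultimately show "open (B i - {0}) \<and> B i - {0} \<noteq> {} \<and> 0 \<notin> B i - {0}"
      using B(2) by (auto intro: open_Diff)
  next
    fix z assume z: "z \<in> Cn n" "\<forall>i<n. z i \<in> B i - {0}"
    have "z i \<in> B i" for i
    proof (cases "i < n")
      case False
      hence "z i = z0 i" using z(1) z0 U(2) by (auto simp: Cn_def)
      thus ?thesis using B(1) by auto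
    qed (use z(2) in auto)
    thus "z \<in> S" using B(3) z(1) U(2) by auto
  qed
qed

lemma laurent_abs_conv_to_cong:
  "(\<And>k. k \<in> idx n \<Longrightarrow> a k = c k) \<Longrightarrow> laurent_abs_conv_to n a z s = laurent_abs_conv_to n c z s"
  unfolding laurent_abs_conv_to_def terms_defined_def
  by (simp cong: summable_on_cong has_sum_cong)

lemma inner_sum_eq_if_slice_expansions_agree:
  fixes a c :: "(nat \<Rightarrow> int) \<Rightarrow> complex" and F :: "complex \<Rightarrow> complex" and p :: int
  assumes W: "open W" "W \<noteq> {}" "0 \<notin> W"
    and c_conv: "\<And>w. w \<in> W \<Longrightarrow> ((\<lambda>k. c k * lmono (Suc m) k (z(m := w))) has_sum F w) (idx (Suc m))"
    and c_low: "\<And>k. k \<in> idx (Suc m) \<Longrightarrow> c k \<noteq> 0 \<Longrightarrow> p \<le> k m"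
    and a_conv: "\<And>w. w \<in> W \<Longrightarrow> \<exists>K. (\<forall>j < -K. inner_sum (Suc m) a j z = 0) \<and>
        (\<lambda>N::nat. \<Sum>j\<in>{-K..int N}. inner_sum (Suc m) a j z * w powi j) \<longlonglongrightarrow> F w"
  shows "inner_sum (Suc m) a j z = inner_sum (Suc m) c j z"
proof (rule lower_truncated_laurent_coeffs_eq[OF W, where F=F and p=p])
  show "\<forall>j<p. inner_sum (Suc m) c j z = 0"
    using c_low idx_Suc_extend by (force simp: inner_sum_def intro: infsum_0)
  show "\<forall>w\<in>W. ((\<lambda>j. inner_sum (Suc m) c j z * w powi j) has_sum F w) UNIV"
    using laurent_has_sum_iterated(2)[OF c_conv] W(3) by (fastforce simp: inner_sum_def)
qed (use a_conv in blast)

lemma laurent_coeffs_eq_if_iterated_expansion: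
  fixes a c :: "(nat \<Rightarrow> int) \<Rightarrow> complex" and f :: "(nat \<Rightarrow> complex) \<Rightarrow> complex" and p :: int
  assumes S: "openin (top_of_set (Cn (Suc m))) S" "S \<noteq> {}"
    and c_conv: "\<And>z. z \<in> S \<Longrightarrow> ((\<lambda>k. c k * lmono (Suc m) k z) has_sum f z) (idx (Suc m))"
    and c_low: "\<And>k. k \<in> idx (Suc m) \<Longrightarrow> c k \<noteq> 0 \<Longrightarrow> p \<le> k m"
    and a_inner: "\<And>j z. z \<in> S \<Longrightarrow> (\<lambda>k. a (k(m := j)) * lmono m k (z(m := 0))) summable_on idx m"
    and a_outer: "\<And>z. z \<in> S \<Longrightarrow> \<exists>K. (\<forall>j < -K. inner_sum (Suc m) a j (z(m := 0)) = 0) \<and>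
        (\<lambda>N::nat. \<Sum>j\<in>{-K..int N}. inner_sum (Suc m) a j (z(m := 0)) * z m powi j) \<longlonglongrightarrow> f z"
    and k: "k \<in> idx (Suc m)"
  shows "a k = c k"
proof -
  obtain X where X: "\<And>i. open (X i) \<and> X i \<noteq> {} \<and> 0 \<notin> X i"
    and box: "\<And>z. z \<in> Cn (Suc m) \<Longrightarrow> \<forall>i<Suc m. z i \<in> X i \<Longrightarrow> z \<in> S"
    using openin_Cn_contains_punctured_box[OF S] by blast
  have slices: "((\<lambda>k. (a (k(m := j)) - c (k(m := j))) * lmono m k z) has_sum 0) (idx m)"
    if z: "z \<in> Cn m" "\<forall>i<m. z i \<in> X i" for z j
  proof -
    have in_S: "z(m := w) \<in> S" if "w \<in> X m" for w
      using box[OF Cn_Suc_extend[OF z(1)]] z(2) that by (auto simp: less_Suc_eq)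
    have restrict: "z(m := 0) = z"
      using z(1) by (auto simp: Cn_def fun_eq_iff)
    obtain w0 where w0: "w0 \<in> X m" "w0 \<noteq> 0" using X by blast
    have eq: "inner_sum (Suc m) a j z = inner_sum (Suc m) c j z"
      using X[of m] c_conv[OF in_S] c_low a_outer[OF in_S]
      by (intro inner_sum_eq_if_slice_expansions_agree[where W="X m" and p=p]) (auto simp: restrict)
    have "((\<lambda>k. a (k(m := j)) * lmono m k z) has_sum inner_sum (Suc m) a j z) (idx m)"
      using a_inner[OF in_S[OF w0(1)], of j] by (simp add: restrict inner_sum_def has_sum_infsum)
    moreover have "((\<lambda>k. c (k(m := j)) * lmono m k z) has_sum inner_sum (Suc m) c j z) (idx m)"
      using laurent_has_sum_iterated(1)[OF c_conv[OF in_S[OF w0(1)]] w0(2)]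
      by (simp add: inner_sum_def has_sum_infsum)
    ultimately have "((\<lambda>k. a (k(m := j)) * lmono m k z + - (c (k(m := j)) * lmono m k z)) has_sum
        (inner_sum (Suc m) a j z + - inner_sum (Suc m) c j z)) (idx m)"
      by (intro has_sum_add has_sum_uminusI)
    thus ?thesis by (simp add: eq left_diff_distrib)
  qed
  have "a ((k(m := 0))(m := k m)) - c ((k(m := 0))(m := k m)) = 0"
    using X slices idx_Suc_restrict[OF k]
    by (intro laurent_eq_0_if_vanishing_on_box[where b="\<lambda>k'. a (k'(m := k m)) - c (k'(m := k m))"
          and X=X]) auto
  thus ?thesis by simp
qed

theorem mainTheorem3:
  fixes n :: nat
    and P Q :: "(nat \<Rightarrow> nat) \<Rightarrow> complex"
    and f :: "(nat \<Rightarrow> complex) \<Rightarrow> complex"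
    and T S :: "(nat \<Rightarrow> complex) set"
    and a :: "(nat \<Rightarrow> int) \<Rightarrow> complex"
  assumes n: "n \<ge> 1"
    and P: "is_mpoly n P" and Q: "is_mpoly n Q" and Qnz: "\<exists>\<alpha>. Q \<alpha> \<noteq> 0"
    and T: "domain_in n T" "multicircular n T"
    and holo: "holo_on n f T"
    and rat: "\<forall>z\<in>T. mpoly_eval n Q z \<noteq> 0 \<longrightarrow> f z = mpoly_eval n P z / mpoly_eval n Q z"
    and lowest: "\<exists>c. (\<forall>z\<in>T. laurent_abs_conv_to n c z (f z)) \<and>
        (\<exists>k\<in>idx n. c k \<noteq> 0 \<and> k (n - 1) = - int (pole_order_zn n P Q)) \<and>
        (\<forall>k\<in>idx n. c k \<noteq> 0 \<longrightarrow> - int (pole_order_zn n P Q) \<le> k (n - 1))"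
    and S: "S \<noteq> {}" "S \<subseteq> T" "openin (top_of_set (Cn n)) S"
    and inner: "\<forall>kn::int. \<forall>z'\<in>proj_last n ` S.
        \<exists>s. laurent_abs_conv_to (n - 1) (\<lambda>k'. a (k'(n - 1 := kn))) z' s"
    and outer: "\<forall>z\<in>S.
        finite {kn::int. kn < 0 \<and> inner_sum n a kn (proj_last n z) \<noteq> 0} \<and>
        (\<forall>kn::int. kn < 0 \<and> inner_sum n a kn (proj_last n z) \<noteq> 0 \<longrightarrow> z (n - 1) \<noteq> 0) \<and>
        (\<exists>K::int. (\<forall>kn. kn < - K \<longrightarrow> inner_sum n a kn (proj_last n z) = 0) \<and>
           ((\<lambda>N::nat. \<Sum>kn\<in>{- K..int N}. inner_sum n a kn (proj_last n z) * z (n - 1) powi kn)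
              \<longlonglongrightarrow> f z))"
  shows "\<forall>z\<in>T. laurent_abs_conv_to n a z (f z)"
proof -
  obtain c where c_conv: "\<forall>z\<in>T. laurent_abs_conv_to n c z (f z)"
    and c_low: "\<forall>k\<in>idx n. c k \<noteq> 0 \<longrightarrow> - int (pole_order_zn n P Q) \<le> k (n - 1)"
    using lowest by blast
  obtain m where m: "n = Suc m" using n by (cases n) auto
  have proj: "proj_last (Suc m) z = z(m := 0)" for z by (simp add: proj_last_def)
  \<comment> \<open>Rationality, holomorphy and the shape of T matter only through the expansion c given by
    lowest, and of that only the lower bound on its z_n-exponents is used.\<close>
  have "a k = c k" if "k \<in> idx n" for k
  proof (rule laurent_coeffs_eq_if_iterated_expansion[where S=S and f=f
        and p="- int (pole_order_zn n P Q)"])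
    show "((\<lambda>k. c k * lmono (Suc m) k z) has_sum f z) (idx (Suc m))" if "z \<in> S" for z
      using c_conv S(2) that by (auto simp: laurent_abs_conv_to_def m)
    show "(\<lambda>k. a (k(m := j)) * lmono m k (z(m := 0))) summable_on idx m" if z: "z \<in> S" for j z
    proof -
      obtain s where "laurent_abs_conv_to (n - 1) (\<lambda>k. a (k(n - 1 := j))) (proj_last n z) s"
        using inner imageI[OF z, of "proj_last n"] by blast
      thus ?thesis by (auto simp: laurent_abs_conv_to_def m proj intro: has_sum_imp_summable)
    qed
  qed (use S c_low outer that in \<open>simp_all add: m proj\<close>)
  thus ?thesis using c_conv laurent_abs_conv_to_cong[of n a c] by simp
qed

end
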